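(* Let $\mathcal{C}$ be a binary cyclic code of length $n$ whose generator polynomial $g\in\mathbb{F}_2[X]$, $g\mid X^n-1$, of degree $r$, is a product of distinct irreducible polynomials. Then the burst-covering radius $b$ of $\mathcal{C}$ satisfies \[ b=\max_{f\in\mathcal{F}_r}\Bigl(\min_{k\ge0}\deg\bigl(X^kf \bmod g\bigr)+1\Bigr), \] where $\mathcal{F}_r=\{f\in\mathbb{F}_2[X]:\deg f<r\}$.
   Context: The burst-covering radius of a code $\mathcal{C}\subseteq\mathbb{F}_2^n$ is the least $b$ such that for every $y\in\mathbb{F}_2^n$ there is $c\in\mathcal{C}$ with $\operatorname{supp}(y-c)\subseteq\{i,i+1,\dots,i+b-1\}$ (indices modulo $n$) for some $i$; equivalently, for linear codes, the least $b$ such that every syndrome is a linear combination of $b$ cyclically consecutive columns of a parity-check matrix. Convention: $\deg(0)=-\infty$. *)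

theory Defs
  imports "HOL-Computational_Algebra.Polynomial" "HOL-Library.Z2" "HOL-Library.Extended_Real"
begin

text \<open>Binary words of length n are identified with polynomials over GF(2) = bit of degree < n
  (coefficient j is the j-th coordinate, j = 0..n-1).\<close>

definition words :: "nat \<Rightarrow> bit poly set" where
  "words n = {p. degree p < n}"

definition cyclic_code :: "nat \<Rightarrow> bit poly \<Rightarrow> bit poly set" where
  "cyclic_code n g = {c. degree c < n \<and> g dvd c}"

definition cyclic_burst :: "nat \<Rightarrow> nat \<Rightarrow> bit poly \<Rightarrow> bool" where
  "cyclic_burst n b e \<longleftrightarrow> (\<exists>i<n. \<forall>j. coeff e j \<noteq> 0 \<longrightarrow> (\<exists>t<b. j = (i + t) mod n))"

definition burst_covering_radius :: "nat \<Rightarrow> bit poly set \<Rightarrow> nat" where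
  "burst_covering_radius n C =
     (LEAST b. \<forall>y\<in>words n. \<exists>c\<in>C. cyclic_burst n b (y - c))"

definition deg_ninf :: "'a::zero poly \<Rightarrow> ereal" where
  "deg_ninf p = (if p = 0 then -\<infinity> else ereal (real (degree p)))"

definition prod_distinct_irreducibles :: "bit poly \<Rightarrow> bool" where
  "prod_distinct_irreducibles g \<longleftrightarrow>
     (\<exists>P. finite P \<and> (\<forall>p\<in>P. irreducible p) \<and> g = \<Prod>P)"

end

theory Submission
  imports Defs
begin

text \<open>Multiplication by \<open>X\<close> acts on words of length \<open>n\<close> as the cyclic shift modulo \<open>X\<^sup>n - 1\<close>,
  hence also modulo every divisor \<open>g\<close> of \<open>X\<^sup>n - 1\<close>. A word \<open>y\<close> lies within a burst of length \<open>b\<close>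
  of the code iff \<open>y\<close> agrees modulo \<open>g\<close> with a cyclic shift of a polynomial supported on
  \<open>{0..<b}\<close>, i.e. iff \<open>X\<^sup>k y mod g\<close> has degree below \<open>b\<close> for some \<open>k\<close>. Since this only depends
  on \<open>y mod g\<close>, which ranges over all polynomials of degree below \<open>r\<close>, the covering radius is the
  least \<open>b\<close> such that every such \<open>f\<close> has a shift with \<open>deg (X\<^sup>k f mod g) < b\<close>; for degrees in
  \<open>\<nat> \<union> {-\<infinity>}\<close> this least \<open>b\<close> is the max-min expression.\<close>

lemma divisor_of_X_power_minus_one:
  fixes g :: "'a::idom poly"
  assumes "0 < n" and "g dvd monom 1 n - 1"
  shows "g \<noteq> 0" and "degree g \<le> n"
proof -
  have "coeff (monom 1 n - 1 :: 'a poly) n = 1" using assms(1) by simp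
  then have "monom 1 n - 1 \<noteq> (0 :: 'a poly)" by force
  then show "g \<noteq> 0" using assms(2) by auto
  have "degree g \<le> degree (monom 1 n - 1 :: 'a poly)"
    by (rule dvd_imp_degree_le) fact+
  also have "\<dots> \<le> n"
    by (rule degree_diff_le) (simp_all add: degree_monom_le)
  finally show "degree g \<le> n" .
qed

lemma X_power_minus_one_dvd_monom_diff:
  fixes c :: "'a::comm_ring_1"
  assumes "a mod n = b mod n"
  shows "(monom 1 n - 1) dvd (monom c a - monom c b)"
proof -
  have reduce: "(monom 1 n - 1) dvd (monom c m - monom c (m mod n))" for m
  proof -
    have "monom c m - monom c (m mod n) = monom c (m mod n) * (monom 1 n ^ (m div n) - 1)"
      by (simp add: monom_power mult_monom algebra_simps)
    moreover have "(monom 1 n - 1) dvd (monom 1 n ^ (m div n) - (1::'a poly))"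
      unfolding power_diff_1_eq by simp
    ultimately show ?thesis by (metis dvd_mult)
  qed
  have "monom c a - monom c b = (monom c a - monom c (a mod n)) - (monom c b - monom c (b mod n))"
    using assms by simp
  then show ?thesis using reduce by (metis dvd_diff)
qed

lemma dvd_monom_imp_dvd_one:
  fixes g :: "'a::comm_ring_1 poly"
  assumes "0 < n" and "g dvd monom 1 n - 1" and "g dvd monom 1 k"
  shows "g dvd 1"
proof -
  have "g dvd monom 1 (k * n)"
    using assms(1,3) dvd_mult2[of g "monom 1 k" "monom 1 (k * n - k)"]
    by (simp add: mult_monom)
  moreover have "g dvd monom 1 (k * n) - monom 1 0"
    using assms(2) X_power_minus_one_dvd_monom_diff[of "k * n" n 0 1] dvd_trans by auto
  ultimately have "g dvd monom 1 (k * n) - (monom 1 (k * n) - monom 1 0)"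
    by (rule dvd_diff)
  then show ?thesis by simp
qed

definition cyclic_shift :: "nat \<Rightarrow> nat \<Rightarrow> 'a::comm_monoid_add poly \<Rightarrow> 'a poly" where
  "cyclic_shift n k p = (\<Sum>j<n. monom (coeff p j) ((k + j) mod n))"

lemma X_power_minus_one_dvd_monom_mult_minus_cyclic_shift:
  fixes p :: "'a::comm_ring_1 poly"
  assumes "degree p < n"
  shows "(monom 1 n - 1) dvd (monom 1 k * p - cyclic_shift n k p)"
proof -
  have "{..<n} = {..n - 1}" using assms by auto
  then have "(\<Sum>j<n. monom (coeff p j) j) = p"
    using poly_as_sum_of_monoms'[of p "n - 1"] assms by simp
  then have "monom 1 k * p = monom 1 k * (\<Sum>j<n. monom (coeff p j) j)" by simp
  also have "\<dots> = (\<Sum>j<n. monom (coeff p j) (k + j))"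
    by (simp add: sum_distrib_left mult_monom)
  finally have "monom 1 k * p = (\<Sum>j<n. monom (coeff p j) (k + j))" .
  then have "monom 1 k * p - cyclic_shift n k p
      = (\<Sum>j<n. monom (coeff p j) (k + j) - monom (coeff p j) ((k + j) mod n))"
    by (simp add: cyclic_shift_def sum_subtractf)
  also have "(monom 1 n - 1) dvd \<dots>"
    by (intro dvd_sum X_power_minus_one_dvd_monom_diff) simp
  finally show ?thesis .
qed

lemma coeff_cyclic_shift_neq_zero:
  assumes "coeff (cyclic_shift n k p) m \<noteq> 0"
  obtains j where "j < n" and "coeff p j \<noteq> 0" and "m = (k + j) mod n"
proof (rule ccontr)
  assume "\<not> thesis"
  then have "(\<Sum>j<n. if (k + j) mod n = m then coeff p j else 0) = 0"
    using that by (intro sum.neutral) auto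
  with assms show False by (simp add: cyclic_shift_def coeff_sum coeff_monom)
qed

lemma degree_cyclic_shift_less:
  assumes "0 < n"
  shows "degree (cyclic_shift n k p) < n"
  unfolding cyclic_shift_def
  using assms by (intro degree_sum_less) (auto intro: le_less_trans[OF degree_monom_le])

lemma deg_ninf_less_iff: "deg_ninf p < ereal (real b) \<longleftrightarrow> (\<forall>j. coeff p j \<noteq> 0 \<longrightarrow> j < b)"
proof (cases "p = 0")
  case False
  then have "degree p < b \<longleftrightarrow> (\<forall>j. coeff p j \<noteq> 0 \<longrightarrow> j < b)"
    using le_degree le_less_trans leading_coeff_neq_0 by blast
  with False show ?thesis by (simp add: deg_ninf_def)
qed (simp add: deg_ninf_def)

lemma deg_ninf_less_imp_add_one_le:
  assumes "deg_ninf p < ereal (real b)"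
  shows "deg_ninf p + 1 \<le> ereal (real b)"
  using assms by (auto simp: deg_ninf_def split: if_splits)

lemma deg_ninf_mod_le: "deg_ninf (p mod g) \<le> deg_ninf (p :: 'a::field poly)"
proof (cases "p mod g = 0")
  case False
  then have "p \<noteq> 0" by auto
  moreover have "degree (p mod g) \<le> degree p"
  proof (cases "degree p < degree g")
    case True
    then show ?thesis by (simp add: mod_poly_less)
  next
    case False
    with \<open>p mod g \<noteq> 0\<close> show ?thesis
      using degree_mod_less'[of g p] by (cases "g = 0") auto
  qed
  ultimately show ?thesis using False by (simp add: deg_ninf_def)
qed (simp add: deg_ninf_def)

lemma deg_ninf_mod_less:
  fixes g :: "'a::field poly"
  assumes "g \<noteq> 0"
  shows "deg_ninf (p mod g) < ereal (real (degree g))"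
  using degree_mod_less[OF assms, of p] by (auto simp: deg_ninf_def)

lemma Least_deg_ninf_less_eq_SUP_INF:
  fixes h :: "'a \<Rightarrow> 'b \<Rightarrow> 'c::zero poly"
  assumes bound: "\<forall>f\<in>A. \<exists>k. deg_ninf (h f k) < ereal (real b0)"
    and "f0 \<in> A" and "\<And>k. h f0 k \<noteq> 0"
  shows "ereal (real (LEAST b. \<forall>f\<in>A. \<exists>k. deg_ninf (h f k) < ereal (real b)))
    = (SUP f\<in>A. (INF k. deg_ninf (h f k)) + 1)"
proof -
  define P where "P b \<longleftrightarrow> (\<forall>f\<in>A. \<exists>k. deg_ninf (h f k) < ereal (real b))" for b
  define B where "B = Least P"
  have "P B" unfolding B_def using bound by (intro LeastI[of P b0]) (simp add: P_def)
  have "B \<noteq> 0"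
  proof
    assume "B = 0"
    then obtain k where "deg_ninf (h f0 k) < ereal 0"
      using \<open>P B\<close> \<open>f0 \<in> A\<close> by (auto simp: P_def)
    with \<open>h f0 k \<noteq> 0\<close> show False by (simp add: deg_ninf_def)
  qed
  then have "\<not> P (B - 1)" unfolding B_def by (intro not_less_Least) simp
  then obtain f where "f \<in> A" and f: "\<And>k. ereal (real (B - 1)) \<le> deg_ninf (h f k)"
    by (auto simp: P_def not_less)
  have "ereal (real B) = ereal (real (B - 1)) + 1" using \<open>B \<noteq> 0\<close> by simp
  also have "\<dots> \<le> (INF k. deg_ninf (h f k)) + 1"
    using f by (intro add_right_mono INF_greatest)
  also have "\<dots> \<le> (SUP f\<in>A. (INF k. deg_ninf (h f k)) + 1)"
    using \<open>f \<in> A\<close> by (rule SUP_upper)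
  finally have lower: "ereal (real B) \<le> (SUP f\<in>A. (INF k. deg_ninf (h f k)) + 1)" .
  have "(INF k. deg_ninf (h f k)) + 1 \<le> ereal (real B)" if "f \<in> A" for f
  proof -
    obtain k where k: "deg_ninf (h f k) < ereal (real B)" using \<open>P B\<close> \<open>f \<in> A\<close> by (auto simp: P_def)
    have "(INF k. deg_ninf (h f k)) + 1 \<le> deg_ninf (h f k) + 1"
      by (intro add_right_mono INF_lower) simp
    also have "\<dots> \<le> ereal (real B)" using k by (rule deg_ninf_less_imp_add_one_le)
    finally show ?thesis .
  qed
  then have "(SUP f\<in>A. (INF k. deg_ninf (h f k)) + 1) \<le> ereal (real B)" by (rule SUP_least)
  with lower show ?thesis unfolding B_def P_def by (rule antisym)
qed

lemma burst_cover_of_short_shifted_residue: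
  fixes g y :: "bit poly"
  assumes n: "0 < n" and g: "g dvd monom 1 n - 1" and y: "degree y < n"
    and short: "deg_ninf (monom 1 k * y mod g) < ereal (real b)"
  shows "\<exists>c\<in>cyclic_code n g. cyclic_burst n b (y - c)"
proof -
  have "g \<noteq> 0" and "degree g \<le> n" using divisor_of_X_power_minus_one[OF n g] by auto
  define z where "z = monom 1 k * y mod g"
  have z_short: "t < b" if "coeff z t \<noteq> 0" for t
    using short that by (simp add: z_def deg_ninf_less_iff)
  have "z = 0 \<or> degree z < degree g"
    unfolding z_def using \<open>g \<noteq> 0\<close> by (rule degree_mod_less)
  then have "degree z < n" using \<open>degree g \<le> n\<close> n by auto
  define i where "i = (n - 1) * k"
  define e where "e = cyclic_shift n i z"
  have "g dvd monom 1 i * z - e" unfolding e_def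
    by (rule dvd_trans[OF g X_power_minus_one_dvd_monom_mult_minus_cyclic_shift[OF \<open>degree z < n\<close>]])
  moreover have "g dvd monom 1 i * z - monom 1 (i + k) * y"
  proof -
    have "monom 1 i * z mod g = monom 1 i * (monom 1 k * y) mod g"
      unfolding z_def by (rule mod_mult_right_eq)
    then show ?thesis by (simp add: mod_eq_dvd_iff mult.assoc[symmetric] mult_monom)
  qed
  moreover have "g dvd monom 1 (i + k) * y - y"
  proof -
    have "(i + k) mod n = 0 mod n" using n by (simp add: i_def algebra_simps)
    then have "(monom 1 n - 1) dvd (monom 1 (i + k) - monom 1 0) * y"
      by (intro dvd_mult2 X_power_minus_one_dvd_monom_diff)
    then show ?thesis using dvd_trans[OF g] by (simp add: algebra_simps)
  qed
  moreover have "y - e = (monom 1 i * z - e) - (monom 1 i * z - monom 1 (i + k) * y)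
      - (monom 1 (i + k) * y - y)"
    by (simp add: algebra_simps)
  ultimately have "g dvd y - e" by (metis dvd_diff)
  moreover have "degree (y - e) < n"
    unfolding e_def by (intro degree_diff_less y degree_cyclic_shift_less[OF n])
  moreover have "cyclic_burst n b e"
  proof -
    have "\<exists>t<b. m = (i mod n + t) mod n" if m: "coeff e m \<noteq> 0" for m
    proof -
      obtain t where "t < n" and "coeff z t \<noteq> 0" and "m = (i + t) mod n"
        using m unfolding e_def by (rule coeff_cyclic_shift_neq_zero)
      then show ?thesis using z_short by (auto simp: mod_add_left_eq)
    qed
    then show ?thesis unfolding cyclic_burst_def using n by (intro exI[of _ "i mod n"]) simp
  qed
  ultimately have "y - e \<in> cyclic_code n g" and "cyclic_burst n b (y - (y - e))"
    by (auto simp: cyclic_code_def)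
  then show ?thesis by blast
qed

lemma short_shifted_residue_of_burst_cover:
  fixes g y c :: "bit poly"
  assumes n: "0 < n" and g: "g dvd monom 1 n - 1" and y: "degree y < n"
    and c: "c \<in> cyclic_code n g" and burst: "cyclic_burst n b (y - c)"
  shows "\<exists>k. deg_ninf (monom 1 k * y mod g) < ereal (real b)"
proof -
  obtain i where "i < n" and supp: "\<And>j. coeff (y - c) j \<noteq> 0 \<Longrightarrow> \<exists>t<b. j = (i + t) mod n"
    using burst unfolding cyclic_burst_def by blast
  define k where "k = n - i"
  define w where "w = cyclic_shift n k (y - c)"
  have "degree (y - c) < n"
    using c y by (simp add: cyclic_code_def degree_diff_less)
  then have "g dvd monom 1 k * (y - c) - w"
    unfolding w_def by (rule dvd_trans[OF g X_power_minus_one_dvd_monom_mult_minus_cyclic_shift])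
  moreover have "g dvd monom 1 k * c" using c by (simp add: cyclic_code_def)
  ultimately have "g dvd (monom 1 k * (y - c) - w) + monom 1 k * c" by (rule dvd_add)
  then have residue: "monom 1 k * y mod g = w mod g"
    by (simp add: mod_eq_dvd_iff algebra_simps)
  have "m < b" if m: "coeff w m \<noteq> 0" for m
  proof -
    obtain j where "j < n" and "coeff (y - c) j \<noteq> 0" and "m = (k + j) mod n"
      using m unfolding w_def by (rule coeff_cyclic_shift_neq_zero)
    then obtain t where "t < b" and "m = (k + (i + t) mod n) mod n" using supp by auto
    moreover have "(k + (i + t) mod n) mod n = t mod n"
    proof -
      have "k + (i + t) = n + t" using \<open>i < n\<close> by (simp add: k_def)
      then show ?thesis by (metis mod_add_right_eq mod_add_self1)
    qed
    ultimately show ?thesis by (metis le_less_trans mod_less_eq_dividend)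
  qed
  then have "deg_ninf w < ereal (real b)" by (simp add: deg_ninf_less_iff)
  then have "deg_ninf (w mod g) < ereal (real b)" by (rule order.strict_trans1[OF deg_ninf_mod_le])
  then show ?thesis unfolding residue[symmetric] ..
qed

lemma cyclic_code_burst_cover_iff:
  fixes g :: "bit poly"
  assumes n: "0 < n" and g: "g dvd monom 1 n - 1"
  shows "(\<forall>y\<in>words n. \<exists>c\<in>cyclic_code n g. cyclic_burst n b (y - c)) \<longleftrightarrow>
    (\<forall>f. deg_ninf f < ereal (real (degree g)) \<longrightarrow>
      (\<exists>k. deg_ninf (monom 1 k * f mod g) < ereal (real b)))"
proof -
  have "g \<noteq> 0" and "degree g \<le> n" using divisor_of_X_power_minus_one[OF n g] by auto
  show ?thesis
  proof (intro iffI allI impI ballI)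
    fix f :: "bit poly"
    assume "\<forall>y\<in>words n. \<exists>c\<in>cyclic_code n g. cyclic_burst n b (y - c)"
      and "deg_ninf f < ereal (real (degree g))"
    moreover from this(2) have "degree f < n"
      using \<open>degree g \<le> n\<close> n by (cases "f = 0") (auto simp: deg_ninf_def)
    ultimately show "\<exists>k. deg_ninf (monom 1 k * f mod g) < ereal (real b)"
      using short_shifted_residue_of_burst_cover[OF n g] by (auto simp: words_def)
  next
    fix y :: "bit poly"
    assume "\<forall>f. deg_ninf f < ereal (real (degree g)) \<longrightarrow>
        (\<exists>k. deg_ninf (monom 1 k * f mod g) < ereal (real b))" and "y \<in> words n"
    then obtain k where "deg_ninf (monom 1 k * (y mod g) mod g) < ereal (real b)"
      using deg_ninf_mod_less[OF \<open>g \<noteq> 0\<close>] by blast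
    then have "deg_ninf (monom 1 k * y mod g) < ereal (real b)"
      by (simp add: mod_mult_right_eq)
    with \<open>y \<in> words n\<close> show "\<exists>c\<in>cyclic_code n g. cyclic_burst n b (y - c)"
      using burst_cover_of_short_shifted_residue[OF n g] by (simp add: words_def)
  qed
qed

theorem corollary2:
  fixes n r :: nat and g :: "bit poly"
  assumes "0 < n"
    and "g dvd (monom 1 n - 1)"
    and "degree g = r"
    and "0 < r"
    and "prod_distinct_irreducibles g"
  shows "ereal (real (burst_covering_radius n (cyclic_code n g))) =
    (SUP f\<in>{f :: bit poly. deg_ninf f < ereal (real r)}.
       (INF k::nat. deg_ninf (monom 1 k * f mod g)) + 1)"
proof -
  have "g \<noteq> 0" by (rule divisor_of_X_power_minus_one[OF assms(1,2)])
  have "burst_covering_radius n (cyclic_code n g) = (LEAST b.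
      \<forall>f\<in>{f. deg_ninf f < ereal (real r)}. \<exists>k. deg_ninf (monom 1 k * f mod g) < ereal (real b))"
    unfolding burst_covering_radius_def cyclic_code_burst_cover_iff[OF assms(1,2)] assms(3) by simp
  also have "ereal (real \<dots>) = (SUP f\<in>{f. deg_ninf f < ereal (real r)}.
       (INF k::nat. deg_ninf (monom 1 k * f mod g)) + 1)"
  proof (rule Least_deg_ninf_less_eq_SUP_INF)
    show "\<forall>f\<in>{f. deg_ninf f < ereal (real r)}. \<exists>k. deg_ninf (monom 1 k * f mod g) < ereal (real r)"
      using deg_ninf_mod_less[OF \<open>g \<noteq> 0\<close>] assms(3) by (intro ballI exI[of _ 0]) simp
    show "1 \<in> {f. deg_ninf f < ereal (real r)}" using assms(4) by (simp add: deg_ninf_def)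
    show "monom 1 k * 1 mod g \<noteq> 0" for k
      using dvd_monom_imp_dvd_one[OF assms(1,2), of k] assms(3,4) dvd_imp_degree_le[of g 1]
      by auto
  qed
  finally show ?thesis .
qed

end
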